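(* Let $n\geq 3$ and let $V\subset\overline{\Pi}_n$ be the set of partitions $v_k=\{\{1,k\},\{2\},\dots,\widehat{\{k\}},\dots,\{n\}\}$, $k\in\{2,\dots,n\}$ (the block containing $1$ has exactly two elements and all other blocks are singletons). Let $F_0$ be the subposet of the face poset of $\Delta(\overline{\Pi}_n)$ consisting of all simplices having no vertex in $V$. Then there exists an $(S_1\times S_{n-1})$-equivariant acyclic matching on $F_0$ whose only critical simplex is the vertex $\alpha_n=\{\{1\},\{2,\dots,n\}\}$.
   Context: $\Pi_n$ is the poset of set partitions of $[n]$ ordered by refinement (finer is smaller); $\overline{\Pi}_n$ is obtained by removing its minimum and maximum. $\Delta(\overline{\Pi}_n)$ is the order complex: simplices are nonempty chains of $\overline{\Pi}_n$, vertices are elements of $\overline{\Pi}_n$, and the face poset is the set of simplices ordered by inclusion. $S_1\times S_{n-1}=\{\sigma\in S_n\mid \sigma(1)=1\}$ acts naturally (via its action on $[n]$). A partial matching on a poset is a set of pairs $(a,b)$ with $b$ covering $a$, each element in at most one pair; acyclic means no cycle $b_1>a_1<b_2>\dots<b_t>a_t<b_1$, $t\ge 2$, distinct $b_i$, $(a_i,b_i)$ matched; critical elements are unmatched ones; $H$-equivariant means $(a,b)$ matched implies $(ha,hb)$ matched for all $h\in H$. *)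

theory Defs
  imports "HOL-Library.Disjoint_Sets" "HOL-Combinatorics.Permutations"
begin

definition setpart :: "nat \<Rightarrow> nat set set set" where
  "setpart n = {P. partition_on {1..n} P}"

definition refines :: "nat set set \<Rightarrow> nat set set \<Rightarrow> bool" where
  "refines P Q \<longleftrightarrow> (\<forall>B\<in>P. \<exists>C\<in>Q. B \<subseteq> C)"

definition minpart :: "nat \<Rightarrow> nat set set" where
  "minpart n = (\<lambda>i. {i}) ` {1..n}"

definition maxpart :: "nat \<Rightarrow> nat set set" where
  "maxpart n = {{1..n}}"

definition proper_part :: "nat \<Rightarrow> nat set set set" where
  "proper_part n = setpart n - {minpart n, maxpart n}"

text \<open>Simplices of the order complex: nonempty chains of the proper part.\<close>
definition simplices :: "nat \<Rightarrow> nat set set set set" where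
  "simplices n = {S. S \<noteq> {} \<and> S \<subseteq> proper_part n \<and>
                     (\<forall>x\<in>S. \<forall>y\<in>S. refines x y \<or> refines y x)}"

definition vpart :: "nat \<Rightarrow> nat \<Rightarrow> nat set set" where
  "vpart n k = insert {1, k} ((\<lambda>i. {i}) ` ({2..n} - {k}))"

definition Vset :: "nat \<Rightarrow> nat set set set" where
  "Vset n = vpart n ` {2..n}"

text \<open>F_0: simplices with no vertex in V (ordered by inclusion).\<close>
definition F0 :: "nat \<Rightarrow> nat set set set set" where
  "F0 n = {S \<in> simplices n. S \<inter> Vset n = {}}"

definition alpha :: "nat \<Rightarrow> nat set set" where
  "alpha n = {{1}, {2..n}}"

definition covers_in :: "'a set set \<Rightarrow> 'a set \<Rightarrow> 'a set \<Rightarrow> bool" where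
  "covers_in X a b \<longleftrightarrow> a \<in> X \<and> b \<in> X \<and> a \<subset> b \<and> \<not> (\<exists>c\<in>X. a \<subset> c \<and> c \<subset> b)"

definition partial_matching :: "'a set set \<Rightarrow> ('a set \<times> 'a set) set \<Rightarrow> bool" where
  "partial_matching X M \<longleftrightarrow>
     (\<forall>(a,b)\<in>M. covers_in X a b) \<and>
     (\<forall>p\<in>M. \<forall>q\<in>M. p \<noteq> q \<longrightarrow> {fst p, snd p} \<inter> {fst q, snd q} = {})"

definition acyclic_matching :: "('a set \<times> 'a set) set \<Rightarrow> bool" where
  "acyclic_matching M \<longleftrightarrow>
     \<not> (\<exists>t::nat. \<exists>a b :: nat \<Rightarrow> 'a set. t \<ge> 2 \<and> inj_on b {..<t} \<and>
          (\<forall>i<t. (a i, b i) \<in> M \<and> a i \<subset> b ((i + 1) mod t)))"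

definition critical :: "'a set set \<Rightarrow> ('a set \<times> 'a set) set \<Rightarrow> 'a set set" where
  "critical X M = {x \<in> X. \<forall>(a,b)\<in>M. x \<noteq> a \<and> x \<noteq> b}"

text \<open>The group S_1 \<times> S_{n-1}: permutations of [n] fixing 1; action on simplices.\<close>
definition stab1 :: "nat \<Rightarrow> (nat \<Rightarrow> nat) set" where
  "stab1 n = {\<sigma>. \<sigma> permutes {1..n} \<and> \<sigma> 1 = 1}"

definition act_part :: "(nat \<Rightarrow> nat) \<Rightarrow> nat set set \<Rightarrow> nat set set" where
  "act_part \<sigma> P = (\<lambda>B. \<sigma> ` B) ` P"

definition act_simp :: "(nat \<Rightarrow> nat) \<Rightarrow> nat set set set \<Rightarrow> nat set set set" where
  "act_simp \<sigma> S = act_part \<sigma> ` S"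

definition equivariant_matching ::
  "(nat \<Rightarrow> nat) set \<Rightarrow> (nat set set set \<times> nat set set set) set \<Rightarrow> bool" where
  "equivariant_matching H M \<longleftrightarrow>
     (\<forall>\<sigma>\<in>H. \<forall>(a,b)\<in>M. (act_simp \<sigma> a, act_simp \<sigma> b) \<in> M)"

end

theory Submission
  imports Defs
begin

text \<open>For a simplex \<open>S\<close> let \<open>m\<close> be the finest vertex of \<open>S\<close> in which \<open>1\<close> is not a singleton
  block (the top of \<open>\<Pi>_n\<close> if there is none), and let the pivot of \<open>S\<close> be \<open>m\<close> with \<open>1\<close> split off
  into the block \<open>{1}\<close>. The pivot is comparable with every vertex of \<open>S\<close>, and it is a proper
  partition outside \<open>V\<close>, because splitting off \<open>1\<close> gives the bottom of \<open>\<Pi>_n\<close> only from some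
  \<open>v_k\<close> or from a partition that already has the block \<open>{1}\<close>. As the pivot itself has the block
  \<open>{1}\<close>, it depends only on the vertices without that block, so adding or removing it does not
  change it, and matching \<open>S\<close> with \<open>S \<union> {pivot}\<close> is a matching. It is equivariant because
  splitting off \<open>1\<close> commutes with permutations fixing \<open>1\<close>; the only simplex consisting of its
  pivot alone is \<open>{\<alpha>_n}\<close>; and along an alternating path the number of vertices without the block
  \<open>{1}\<close> never drops, while the number of vertices grows when it stays the same, so there are no
  cycles.\<close>

section \<open>Matchings by a key element\<close>

definition element_matching :: "'a set set \<Rightarrow> ('a set \<Rightarrow> 'a) \<Rightarrow> ('a set \<times> 'a set) set" where
  "element_matching X key = {(S, insert (key S) S) | S. S \<in> X \<and> key S \<notin> S}"

lemma element_matching_image: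
  assumes "inj h" and "(a, b) \<in> element_matching X key"
    and "\<And>S. S \<in> X \<Longrightarrow> h ` S \<in> X" and "\<And>S. S \<in> X \<Longrightarrow> key (h ` S) = h (key S)"
  shows "(h ` a, h ` b) \<in> element_matching X key"
proof -
  from assms(2) have a: "a \<in> X" "key a \<notin> a" "b = insert (key a) a"
    unfolding element_matching_def by auto
  then have "h (key a) \<notin> h ` a"
    using \<open>inj h\<close> by (simp add: inj_image_mem_iff)
  with a assms(3,4) show ?thesis
    unfolding element_matching_def by auto
qed

lemma mod_cycle_not_increasing:
  fixes g :: "nat \<Rightarrow> 'b::order"
  assumes "0 < t" and increasing: "\<And>i. i < t \<Longrightarrow> g i < g (Suc i mod t)"
  shows False
proof -
  have "g 0 \<le> g j" if "j < t" for j
    using that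
  proof (induction j)
    case (Suc j)
    then have "g j < g (Suc j)"
      using increasing[of j] by simp
    with Suc show ?case by simp
  qed simp
  moreover have "g (t - 1) < g 0"
    using increasing[of "t - 1"] \<open>0 < t\<close> by simp
  ultimately show False
    using \<open>0 < t\<close> by (meson diff_less leD zero_less_one)
qed

lemma acyclic_matchingI:
  fixes f :: "'a set \<Rightarrow> 'b::order"
  assumes "\<And>a b a' b'. (a, b) \<in> M \<Longrightarrow> (a', b') \<in> M \<Longrightarrow> a \<subset> b' \<Longrightarrow> b \<noteq> b' \<Longrightarrow> f a < f a'"
  shows "acyclic_matching M"
  unfolding acyclic_matching_def
proof (intro notI, elim exE conjE)
  fix t and a b :: "nat \<Rightarrow> 'a set"
  assume t: "2 \<le> t" and inj: "inj_on b {..<t}"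
    and cycle: "\<forall>i<t. (a i, b i) \<in> M \<and> a i \<subset> b ((i + 1) mod t)"
  show False
  proof (rule mod_cycle_not_increasing[of t "\<lambda>i. f (a i)"])
    fix i assume "i < t"
    define j where "j = Suc i mod t"
    have "j < t"
      using t unfolding j_def by simp
    have "j \<noteq> i"
      using t \<open>i < t\<close> unfolding j_def by (cases "Suc i = t") auto
    then have "b i \<noteq> b j"
      using inj \<open>i < t\<close> \<open>j < t\<close> by (auto dest: inj_onD)
    moreover have "(a i, b i) \<in> M" "a i \<subset> b j" "(a j, b j) \<in> M"
      using cycle \<open>i < t\<close> \<open>j < t\<close> unfolding j_def by auto
    ultimately show "f (a i) < f (a (Suc i mod t))"
      unfolding j_def[symmetric] by (intro assms)
  qed (use t in simp)
qed

locale matching_key =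
  fixes P :: "'a \<Rightarrow> bool" and key :: "'a set \<Rightarrow> 'a"
  assumes key_cong: "{x \<in> S. P x} = {x \<in> T. P x} \<Longrightarrow> key S = key T"
    and not_P_key: "\<not> P (key S)"
begin

lemma key_insert_key: "key (insert (key S) S) = key S"
  by (rule key_cong) (use not_P_key in auto)

lemma key_remove_key: "key (S - {key S}) = key S"
  by (rule key_cong) (use not_P_key in auto)

lemma partial_matching_element_matching:
  assumes closed: "\<And>S. S \<in> X \<Longrightarrow> key S \<notin> S \<Longrightarrow> insert (key S) S \<in> X"
  shows "partial_matching X (element_matching X key)"
  unfolding partial_matching_def
proof (intro conjI ballI impI)
  fix p assume "p \<in> element_matching X key"
  then obtain S where "S \<in> X" "key S \<notin> S" "p = (S, insert (key S) S)"
    unfolding element_matching_def by blast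
  then show "case p of (a, b) \<Rightarrow> covers_in X a b"
    using closed unfolding covers_in_def by auto
next
  have recover: "key U = key S \<and> U - {key U} = S" if "U \<in> {S, insert (key S) S}" "key S \<notin> S" for U S
    using that key_insert_key by auto
  fix p q assume "p \<in> element_matching X key" "q \<in> element_matching X key" "p \<noteq> q"
  then obtain S T where S: "key S \<notin> S" "p = (S, insert (key S) S)"
    and T: "key T \<notin> T" "q = (T, insert (key T) T)" "S \<noteq> T"
    unfolding element_matching_def by blast
  show "{fst p, snd p} \<inter> {fst q, snd q} = {}"
  proof (rule ccontr)
    assume "{fst p, snd p} \<inter> {fst q, snd q} \<noteq> {}"
    then obtain U where "U \<in> {S, insert (key S) S}" "U \<in> {T, insert (key T) T}"
      using S T by auto
    then show False
      using recover[of U S] recover[of U T] S T by auto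
  qed
qed

lemma critical_element_matching:
  "critical X (element_matching X key) = {S \<in> X. key S \<in> S \<and> S - {key S} \<notin> X}"
proof (rule set_eqI)
  fix S
  have lower: "(\<exists>b. (S, b) \<in> element_matching X key) \<longleftrightarrow> S \<in> X \<and> key S \<notin> S"
    unfolding element_matching_def by blast
  have upper: "(\<exists>a. (a, S) \<in> element_matching X key) \<longleftrightarrow> key S \<in> S \<and> S - {key S} \<in> X"
  proof
    assume "\<exists>a. (a, S) \<in> element_matching X key"
    then obtain a where "a \<in> X" "key a \<notin> a" "S = insert (key a) a"
      unfolding element_matching_def by blast
    then show "key S \<in> S \<and> S - {key S} \<in> X"
      using key_insert_key[of a] by auto
  next
    assume "key S \<in> S \<and> S - {key S} \<in> X"
    then have "(S - {key S}, S) \<in> element_matching X key"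
      using key_remove_key[of S] unfolding element_matching_def by force
    then show "\<exists>a. (a, S) \<in> element_matching X key" ..
  qed
  have "S \<in> critical X (element_matching X key) \<longleftrightarrow>
      S \<in> X \<and> \<not> (\<exists>b. (S, b) \<in> element_matching X key) \<and> \<not> (\<exists>a. (a, S) \<in> element_matching X key)"
    unfolding critical_def by blast
  then show "S \<in> critical X (element_matching X key) \<longleftrightarrow> S \<in> {S \<in> X. key S \<in> S \<and> S - {key S} \<notin> X}"
    using lower upper by blast
qed

text \<open>Along an alternating path the number of elements satisfying \<open>P\<close> never drops, and
  when it stays the same the key stays the same, so the number of elements grows.\<close>
lemma acyclic_element_matching:
  assumes finite: "\<And>S. S \<in> X \<Longrightarrow> finite S"
  shows "acyclic_matching (element_matching X key)"
proof (rule acyclic_matchingI[where f = "\<lambda>S. card {x \<in> S. P x} + card S"])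
  fix a b a' b'
  assume "(a, b) \<in> element_matching X key" "(a', b') \<in> element_matching X key"
    and sub: "a \<subset> b'" and "b \<noteq> b'"
  then have a: "key a \<notin> a" "b = insert (key a) a"
    and a': "a' \<in> X" "key a' \<notin> a'" "b' = insert (key a') a'"
    unfolding element_matching_def by auto
  have "finite a'"
    using finite a' by blast
  then have "card a < card b'"
    using sub a' by (intro psubset_card_mono) auto
  also have "card b' = Suc (card a')"
    using a' \<open>finite a'\<close> by simp
  finally have card_le: "card a \<le> card a'" by simp
  have lower: "{x \<in> a. P x} \<subseteq> {x \<in> a'. P x}"
    using sub a' not_P_key[of a'] by auto
  show "card {x \<in> a. P x} + card a < card {x \<in> a'. P x} + card a'"
  proof (cases "{x \<in> a. P x} = {x \<in> a'. P x}")
    case True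
    then have "key a = key a'" by (rule key_cong)
    then have "a \<subset> a'"
      using sub a a' \<open>b \<noteq> b'\<close> by auto
    then have "card a < card a'"
      using \<open>finite a'\<close> by (rule psubset_card_mono[rotated])
    with True show ?thesis by simp
  next
    case False
    with lower have "card {x \<in> a. P x} < card {x \<in> a'. P x}"
      using \<open>finite a'\<close> by (intro psubset_card_mono) auto
    with card_le show ?thesis by simp
  qed
qed

end

section \<open>Refinement and the finest element of a chain\<close>

lemma refines_refl: "refines P P"
  unfolding refines_def by blast

lemma refines_trans: "refines P Q \<Longrightarrow> refines Q R \<Longrightarrow> refines P R"
  unfolding refines_def by (meson order_trans)

lemma refines_antisym:
  assumes "partition_on A P" "partition_on A Q" "refines P Q" "refines Q P"
  shows "P = Q"
  using Disjoint_Sets.refines_asym[of A P Q] assms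
  unfolding Disjoint_Sets.refines_def refines_def by blast

lemma partition_on_maxpart: "1 \<le> n \<Longrightarrow> partition_on {1..n} (maxpart n)"
  unfolding maxpart_def by (intro partition_on_space) simp

lemma refines_maxpart: "partition_on {1..n} P \<Longrightarrow> refines P (maxpart n)"
  unfolding refines_def maxpart_def partition_on_def by blast

lemma partition_on_block_eq:
  assumes "partition_on A P" "B \<in> P" "C \<in> P" "x \<in> B" "x \<in> C"
  shows "B = C"
  using assms unfolding partition_on_def disjoint_def by blast

definition finest :: "nat set set set \<Rightarrow> nat set set" where
  "finest C = (THE m. m \<in> C \<and> (\<forall>x\<in>C. refines m x))"

lemma finest_eqI:
  assumes "\<And>x. x \<in> C \<Longrightarrow> partition_on A x" "m \<in> C" "\<And>x. x \<in> C \<Longrightarrow> refines m x"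
  shows "finest C = m"
  unfolding finest_def by (rule the_equality) (use assms refines_antisym in blast)+

lemma finest_chain:
  assumes "finite C" "C \<noteq> {}" and partitions: "\<And>x. x \<in> C \<Longrightarrow> partition_on A x"
    and chain: "\<And>x y. x \<in> C \<Longrightarrow> y \<in> C \<Longrightarrow> refines x y \<or> refines y x"
  shows "finest C \<in> C" "\<And>x. x \<in> C \<Longrightarrow> refines (finest C) x"
proof -
  have "\<exists>m\<in>C. \<forall>x\<in>C. refines m x"
    using assms(1,2) chain
  proof (induction C rule: finite_ne_induct)
    case (singleton x)
    then show ?case using refines_refl by blast
  next
    case (insert x C)
    then obtain m where m: "m \<in> C" "\<forall>y\<in>C. refines m y" by blast
    show ?case
    proof (cases "refines x m")
      case True
      then show ?thesis using m refines_refl refines_trans by blast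
    next
      case False
      then have "refines m x" using insert.prems m by blast
      then show ?thesis using m by blast
    qed
  qed
  then obtain m where "m \<in> C" "\<forall>x\<in>C. refines m x" ..
  moreover have "finest C = m"
    using finest_eqI[of C A m] partitions calculation by blast
  ultimately show "finest C \<in> C" "\<And>x. x \<in> C \<Longrightarrow> refines (finest C) x" by auto
qed

section \<open>Splitting off the element 1\<close>

definition isolate_one :: "nat set set \<Rightarrow> nat set set" where
  "isolate_one P = insert {1} ((\<lambda>B. B - {1}) ` P - {{}})"

lemma singleton_one_in_isolate_one: "{1} \<in> isolate_one P"
  unfolding isolate_one_def by simp

lemma partition_on_isolate_one:
  assumes "partition_on A P" "1 \<in> A"
  shows "partition_on A (isolate_one P)"
proof -
  have "partition_on (A - {1}) ((\<lambda>B. B - {1}) ` P - {{}})"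
    using partition_on_transform[OF assms(1), of "\<lambda>B. B - {1}"] partition_onD1[OF assms(1)]
    by (auto simp: disjnt_def)
  then show ?thesis
    unfolding isolate_one_def using assms(2) by (subst partition_on_insert) (auto simp: disjnt_def)
qed

lemma isolate_one_refines:
  assumes "partition_on A P" "1 \<in> A"
  shows "refines (isolate_one P) P"
proof -
  obtain B where "B \<in> P" "1 \<in> B"
    using assms partition_onD1 by blast
  then show ?thesis
    unfolding refines_def isolate_one_def by auto
qed

lemma refines_isolate_one:
  assumes Q: "partition_on A Q" and "{1} \<in> Q" "refines Q P"
  shows "refines Q (isolate_one P)"
  unfolding refines_def
proof
  fix B assume "B \<in> Q"
  show "\<exists>C\<in>isolate_one P. B \<subseteq> C"
  proof (cases "B = {1}")
    case True
    then show ?thesis using singleton_one_in_isolate_one by blast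
  next
    case False
    then have "1 \<notin> B"
      using partition_on_block_eq[OF Q \<open>B \<in> Q\<close> \<open>{1} \<in> Q\<close>] by blast
    have "B \<noteq> {}"
      using partition_onD3[OF Q] \<open>B \<in> Q\<close> by blast
    obtain C where "C \<in> P" "B \<subseteq> C"
      using \<open>refines Q P\<close> \<open>B \<in> Q\<close> unfolding refines_def by blast
    with \<open>1 \<notin> B\<close> \<open>B \<noteq> {}\<close> have "C - {1} \<in> isolate_one P" "B \<subseteq> C - {1}"
      unfolding isolate_one_def by auto
    then show ?thesis by blast
  qed
qed

lemma isolate_one_maxpart: "2 \<le> n \<Longrightarrow> isolate_one (maxpart n) = alpha n"
  unfolding isolate_one_def maxpart_def alpha_def by auto

lemma isolate_one_neq_maxpart:
  assumes "2 \<le> n" shows "isolate_one P \<noteq> maxpart n"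
proof
  assume "isolate_one P = maxpart n"
  then have "{1} = {1..n}"
    using singleton_one_in_isolate_one[of P] unfolding maxpart_def by simp
  then have "2 \<in> {1::nat}"
    using assms by (metis atLeastAtMost_iff one_le_numeral)
  then show False by simp
qed

lemma isolate_one_notin_Vset: "isolate_one P \<notin> Vset n"
  using singleton_one_in_isolate_one[of P]
  unfolding Vset_def vpart_def by (auto simp: doubleton_eq_iff)

lemma alpha_neq_minpart: "3 \<le> n \<Longrightarrow> alpha n \<noteq> minpart n"
proof
  assume "3 \<le> n" "alpha n = minpart n"
  then have "{2..n} \<in> minpart n"
    unfolding alpha_def by auto
  then obtain i where "{2..n} = {i}"
    unfolding minpart_def by auto
  moreover have "2 \<in> {2..n}" "3 \<in> {2..n}"
    using \<open>3 \<le> n\<close> by auto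
  ultimately show False by simp
qed

lemma isolate_one_eq_minpartD:
  assumes P: "partition_on {1..n} P" and "1 \<le> n"
    and eq: "isolate_one P = minpart n" and "{1} \<notin> P"
  shows "P \<in> Vset n"
proof -
  have singleton: "\<exists>i. C - {1} = {i}" if "C \<in> P" "C - {1} \<noteq> {}" for C
  proof -
    have "C - {1} \<in> minpart n"
      using that eq unfolding isolate_one_def by blast
    then show ?thesis unfolding minpart_def by blast
  qed
  have "1 \<in> \<Union>P"
    unfolding partition_onD1[OF P, symmetric] using \<open>1 \<le> n\<close> by simp
  then obtain B where B: "B \<in> P" "1 \<in> B" by blast
  with \<open>{1} \<notin> P\<close> have "B - {1} \<noteq> {}"
    by (metis Diff_eq_empty_iff subset_singletonD empty_iff)
  then obtain k where "B - {1} = {k}"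
    using singleton B(1) by blast
  with B have Bk: "B = {1, k}" and "k \<noteq> 1" by auto
  moreover have "k \<in> {1..n}"
    using B(1) Bk partition_onD1[OF P] by blast
  ultimately have k: "k \<in> {2..n}" by auto
  have other: "\<exists>i\<in>{2..n} - {k}. C = {i}" if C: "C \<in> P" "C \<noteq> B" for C
  proof -
    have disj: "1 \<notin> C" "k \<notin> C"
      using partition_on_block_eq[OF P C(1) B(1)] C Bk by blast+
    moreover have "C \<noteq> {}"
      using partition_onD3[OF P] C by blast
    ultimately obtain i where i: "C = {i}"
      using singleton[OF C(1)] by auto
    moreover have "i \<in> {1..n}"
      using C(1) i partition_onD1[OF P] by blast
    ultimately show ?thesis
      using disj by auto
  qed
  have "P = vpart n k"
  proof
    show "P \<subseteq> vpart n k"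
      using other Bk unfolding vpart_def by blast
    show "vpart n k \<subseteq> P"
    proof
      fix C assume "C \<in> vpart n k"
      then consider "C = B" | i where "i \<in> {2..n} - {k}" "C = {i}"
        unfolding vpart_def Bk by blast
      then show "C \<in> P"
      proof cases
        case (2 i)
        then have "i \<in> \<Union>P"
          using partition_onD1[OF P] by auto
        then obtain D where D: "D \<in> P" "i \<in> D" by blast
        with 2 Bk have "D \<noteq> B" by auto
        with D 2 show ?thesis
          using other by fastforce
      qed (use B in simp)
    qed
  qed
  with k show ?thesis
    unfolding Vset_def by blast
qed

section \<open>The pivot of a simplex\<close>

definition pivot_chain :: "nat \<Rightarrow> nat set set set \<Rightarrow> nat set set set" where
  "pivot_chain n S = insert (maxpart n) {P \<in> S. {1} \<notin> P}"

definition pivot :: "nat \<Rightarrow> nat set set set \<Rightarrow> nat set set" where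
  "pivot n S = isolate_one (finest (pivot_chain n S))"

interpretation pivot: matching_key "\<lambda>P. {1} \<notin> P" "pivot n" for n
proof
  show "pivot n S = pivot n T" if "{P \<in> S. {1} \<notin> P} = {P \<in> T. {1} \<notin> P}" for S T
    unfolding pivot_def pivot_chain_def that ..
  show "\<not> {1} \<notin> pivot n S" for S
    unfolding pivot_def using singleton_one_in_isolate_one by blast
qed

lemma simplices_partition_on: "S \<in> simplices n \<Longrightarrow> P \<in> S \<Longrightarrow> partition_on {1..n} P"
  unfolding simplices_def proper_part_def setpart_def by blast

lemma finite_simplices: "S \<in> simplices n \<Longrightarrow> finite S"
  using simplices_partition_on[of S n] finite_subset[of S "Pow (Pow {1..n})"]
  unfolding partition_on_def by blast

lemma finite_F0: "S \<in> F0 n \<Longrightarrow> finite S"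
  unfolding F0_def using finite_simplices by blast

lemma F0_subset: "S \<in> F0 n \<Longrightarrow> T \<subseteq> S \<Longrightarrow> T \<noteq> {} \<Longrightarrow> T \<in> F0 n"
  unfolding F0_def simplices_def by blast

lemma finest_pivot_chain:
  assumes S: "S \<in> simplices n" and "1 \<le> n"
  shows "finest (pivot_chain n S) \<in> pivot_chain n S"
    "\<And>x. x \<in> pivot_chain n S \<Longrightarrow> refines (finest (pivot_chain n S)) x"
    "partition_on {1..n} (finest (pivot_chain n S))"
proof -
  have partitions: "\<And>x. x \<in> pivot_chain n S \<Longrightarrow> partition_on {1..n} x"
    using simplices_partition_on[OF S] partition_on_maxpart[OF \<open>1 \<le> n\<close>]
    unfolding pivot_chain_def by auto
  have chain: "refines x y \<or> refines y x" if "x \<in> pivot_chain n S" "y \<in> pivot_chain n S" for x y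
  proof (cases "x = maxpart n \<or> y = maxpart n")
    case True
    then show ?thesis using partitions that refines_maxpart by blast
  next
    case False
    then have "x \<in> S" "y \<in> S" using that unfolding pivot_chain_def by auto
    then show ?thesis using S unfolding simplices_def by blast
  qed
  have "finite (pivot_chain n S)"
    using finite_simplices[OF S] unfolding pivot_chain_def by simp
  moreover have "pivot_chain n S \<noteq> {}"
    unfolding pivot_chain_def by simp
  ultimately show "finest (pivot_chain n S) \<in> pivot_chain n S"
    "\<And>x. x \<in> pivot_chain n S \<Longrightarrow> refines (finest (pivot_chain n S)) x"
    using finest_chain[OF _ _ partitions chain] by blast+
  then show "partition_on {1..n} (finest (pivot_chain n S))"
    using partitions by blast
qed

lemma pivot_comparable:
  assumes S: "S \<in> simplices n" and "1 \<le> n" and x: "x \<in> S"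
  shows "refines x (pivot n S) \<or> refines (pivot n S) x"
proof -
  define C where "C = pivot_chain n S"
  note m = finest_pivot_chain[OF S \<open>1 \<le> n\<close>, folded C_def]
  have x_part: "partition_on {1..n} x"
    using simplices_partition_on[OF S x] .
  show ?thesis
  proof (cases "refines (finest C) x")
    case True
    then show ?thesis
      using isolate_one_refines[OF m(3)] refines_trans \<open>1 \<le> n\<close> unfolding pivot_def C_def by auto
  next
    case False
    then have "{1} \<in> x"
      using m(2) x unfolding C_def pivot_chain_def by blast
    moreover have "refines x (finest C)"
    proof (cases "finest C = maxpart n")
      case True
      then show ?thesis using refines_maxpart[OF x_part] by simp
    next
      case False
      then have "finest C \<in> S"
        using m(1) unfolding C_def pivot_chain_def by blast
      then show ?thesis
        using S x \<open>\<not> refines (finest C) x\<close> unfolding simplices_def by blast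
    qed
    ultimately show ?thesis
      using refines_isolate_one[OF x_part] unfolding pivot_def C_def by blast
  qed
qed

lemma pivot_proper_part:
  assumes S: "S \<in> F0 n" and "3 \<le> n"
  shows "pivot n S \<in> proper_part n"
proof -
  define C where "C = pivot_chain n S"
  have simplex: "S \<in> simplices n"
    using S unfolding F0_def by blast
  note m = finest_pivot_chain[OF simplex, folded C_def]
  have piv: "pivot n S = isolate_one (finest C)"
    unfolding pivot_def C_def ..
  have "pivot n S \<noteq> minpart n"
  proof (cases "finest C = maxpart n")
    case True
    then show ?thesis
      using piv isolate_one_maxpart alpha_neq_minpart \<open>3 \<le> n\<close> by simp
  next
    case False
    then have "finest C \<in> S" "{1} \<notin> finest C"
      using m(1) \<open>3 \<le> n\<close> unfolding C_def pivot_chain_def by auto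
    moreover from this(1) have "finest C \<notin> Vset n"
      using S unfolding F0_def by blast
    ultimately show ?thesis
      using piv isolate_one_eq_minpartD m(3) \<open>3 \<le> n\<close> by force
  qed
  moreover have "pivot n S \<noteq> maxpart n"
    using piv isolate_one_neq_maxpart \<open>3 \<le> n\<close> by simp
  moreover have "partition_on {1..n} (pivot n S)"
    using piv partition_on_isolate_one m(3) \<open>3 \<le> n\<close> by simp
  ultimately show ?thesis
    unfolding proper_part_def setpart_def by simp
qed

lemma insert_pivot_F0:
  assumes S: "S \<in> F0 n" and "3 \<le> n"
  shows "insert (pivot n S) S \<in> F0 n"
proof -
  have simplex: "S \<in> simplices n"
    using S unfolding F0_def by blast
  have "pivot n S \<notin> Vset n"
    unfolding pivot_def by (rule isolate_one_notin_Vset)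
  moreover have "insert (pivot n S) S \<in> simplices n"
    using simplex pivot_proper_part[OF assms] pivot_comparable[OF simplex] refines_refl \<open>3 \<le> n\<close>
    unfolding simplices_def by auto
  ultimately show ?thesis
    using S unfolding F0_def by blast
qed

lemma pivot_eq_alpha:
  assumes "2 \<le> n" and "{P \<in> S. {1} \<notin> P} = {}"
  shows "pivot n S = alpha n"
proof -
  have "finest {maxpart n} = maxpart n"
    using partition_on_maxpart \<open>2 \<le> n\<close> refines_refl by (intro finest_eqI[where A = "{1..n}"]) auto
  then show ?thesis
    unfolding pivot_def pivot_chain_def assms(2) using isolate_one_maxpart[OF \<open>2 \<le> n\<close>] by simp
qed

lemma alpha_F0:
  assumes "3 \<le> n" shows "{alpha n} \<in> F0 n"
proof -
  have alpha: "alpha n = isolate_one (maxpart n)"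
    using isolate_one_maxpart \<open>3 \<le> n\<close> by simp
  have "partition_on {1..n} (alpha n)"
    unfolding alpha using partition_on_isolate_one partition_on_maxpart \<open>3 \<le> n\<close> by simp
  moreover have "alpha n \<noteq> maxpart n" "alpha n \<notin> Vset n"
    unfolding alpha using isolate_one_neq_maxpart isolate_one_notin_Vset \<open>3 \<le> n\<close> by simp_all
  moreover have "alpha n \<noteq> minpart n"
    using alpha_neq_minpart \<open>3 \<le> n\<close> by simp
  ultimately show ?thesis
    unfolding F0_def simplices_def proper_part_def setpart_def using refines_refl by auto
qed

lemma critical_F0:
  assumes "3 \<le> n"
  shows "critical (F0 n) (element_matching (F0 n) (pivot n)) = {{alpha n}}"
  unfolding pivot.critical_element_matching
proof (intro equalityI subsetI)
  fix S assume "S \<in> {S \<in> F0 n. pivot n S \<in> S \<and> S - {pivot n S} \<notin> F0 n}"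
  then have S: "S \<in> F0 n" "pivot n S \<in> S" "S - {pivot n S} \<notin> F0 n" by auto
  then have "S - {pivot n S} = {}"
    using F0_subset[of S n "S - {pivot n S}"] by blast
  with S(2) have single: "S = {pivot n S}" by blast
  then have "{P \<in> S. {1} \<notin> P} = {}"
    using pivot.not_P_key[of n S] by auto
  then have "pivot n S = alpha n"
    using pivot_eq_alpha \<open>3 \<le> n\<close> by simp
  with single show "S \<in> {{alpha n}}" by simp
next
  fix S assume "S \<in> {{alpha n}}"
  then have S: "S = {alpha n}" by simp
  moreover have "{1} \<in> alpha n"
    unfolding alpha_def by simp
  ultimately have "pivot n S = alpha n"
    using pivot_eq_alpha \<open>3 \<le> n\<close> by simp
  moreover have "{} \<notin> F0 n"
    unfolding F0_def simplices_def by blast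
  ultimately show "S \<in> {S \<in> F0 n. pivot n S \<in> S \<and> S - {pivot n S} \<notin> F0 n}"
    using S alpha_F0[OF \<open>3 \<le> n\<close>] by simp
qed

section \<open>Symmetry under permutations fixing 1\<close>

lemma stab1D:
  assumes "\<sigma> \<in> stab1 n"
  shows "inj \<sigma>" "\<sigma> 1 = 1" "\<sigma> ` {1..n} = {1..n}"
proof -
  have "\<sigma> permutes {1..n}" "\<sigma> 1 = 1"
    using assms unfolding stab1_def by auto
  then show "inj \<sigma>" "\<sigma> 1 = 1" "\<sigma> ` {1..n} = {1..n}"
    by (simp_all add: permutes_inj permutes_image)
qed

lemma stab1_image_atLeast2:
  assumes "\<sigma> \<in> stab1 n" shows "\<sigma> ` {2..n} = {2..n}"
proof -
  have "{2..n} = {1..n} - {1}" by auto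
  then show ?thesis
    using image_set_diff[OF stab1D(1)[OF assms], of "{1..n}" "{1}"] stab1D[OF assms] by simp
qed

lemma inj_image_fun: "inj f \<Longrightarrow> inj ((`) f)"
  using inj_on_image[of f UNIV] by simp

lemma inj_act_part:
  assumes "inj \<sigma>" shows "inj (act_part \<sigma>)"
proof -
  have "act_part \<sigma> = (`) ((`) \<sigma>)"
    unfolding act_part_def by (rule ext) simp
  then show ?thesis
    using inj_image_fun[OF inj_image_fun[OF assms]] by simp
qed

lemma refines_act_part_iff: "inj \<sigma> \<Longrightarrow> refines (act_part \<sigma> P) (act_part \<sigma> Q) \<longleftrightarrow> refines P Q"
  unfolding refines_def act_part_def by (simp add: inj_image_subset_iff)

lemma partition_on_act_part:
  assumes "inj \<sigma>" "partition_on A P"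
  shows "partition_on (\<sigma> ` A) (act_part \<sigma> P)"
proof -
  have "{} \<notin> (`) \<sigma> ` P"
    using partition_onD3[OF assms(2)] by auto
  then show ?thesis
    using partition_on_inj_image[OF assms(2), of \<sigma>] \<open>inj \<sigma>\<close> inj_on_subset[of \<sigma> UNIV A]
    unfolding act_part_def by simp
qed

lemma act_part_maxpart: "\<sigma> ` {1..n} = {1..n} \<Longrightarrow> act_part \<sigma> (maxpart n) = maxpart n"
  unfolding act_part_def maxpart_def by simp

lemma act_part_minpart: "\<sigma> ` {1..n} = {1..n} \<Longrightarrow> act_part \<sigma> (minpart n) = minpart n"
  unfolding act_part_def minpart_def image_image by (simp add: image_image[of "\<lambda>i. {i}" \<sigma>, symmetric])

lemma singleton_one_in_act_part_iff:
  assumes "inj \<sigma>" "\<sigma> 1 = 1"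
  shows "{1} \<in> act_part \<sigma> P \<longleftrightarrow> {1} \<in> P"
proof -
  have "\<sigma> ` {1} \<in> (`) \<sigma> ` P \<longleftrightarrow> {1} \<in> P"
    using inj_image_mem_iff[OF inj_image_fun[OF \<open>inj \<sigma>\<close>]] .
  then show ?thesis
    unfolding act_part_def using \<open>\<sigma> 1 = 1\<close> by simp
qed

lemma act_part_isolate_one:
  assumes "inj \<sigma>" "\<sigma> 1 = 1"
  shows "act_part \<sigma> (isolate_one P) = isolate_one (act_part \<sigma> P)"
proof -
  have "inj ((`) \<sigma>)"
    using inj_image_fun[OF \<open>inj \<sigma>\<close>] .
  moreover have "\<sigma> ` (B - {1}) = \<sigma> ` B - {1}" for B
    using image_set_diff[OF \<open>inj \<sigma>\<close>, of B "{1}"] \<open>\<sigma> 1 = 1\<close> by simp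
  ultimately show ?thesis
    unfolding act_part_def isolate_one_def using \<open>\<sigma> 1 = 1\<close>
    by (simp add: image_set_diff image_image)
qed

lemma act_part_vpart:
  assumes "\<sigma> \<in> stab1 n" "k \<in> {2..n}"
  shows "act_part \<sigma> (vpart n k) = vpart n (\<sigma> k)"
proof -
  have "(\<lambda>i. {\<sigma> i}) ` ({2..n} - {k}) = (\<lambda>i. {i}) ` (\<sigma> ` ({2..n} - {k}))"
    by (simp only: image_image)
  also have "\<sigma> ` ({2..n} - {k}) = {2..n} - {\<sigma> k}"
    using image_set_diff[OF stab1D(1)[OF assms(1)]] stab1_image_atLeast2[OF assms(1)] by simp
  finally have "(\<lambda>i. {\<sigma> i}) ` ({2..n} - {k}) = (\<lambda>i. {i}) ` ({2..n} - {\<sigma> k})" .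
  then show ?thesis
    unfolding act_part_def vpart_def using stab1D(2)[OF assms(1)] by (simp add: image_image)
qed

lemma act_part_in_Vset_iff:
  assumes "\<sigma> \<in> stab1 n"
  shows "act_part \<sigma> P \<in> Vset n \<longleftrightarrow> P \<in> Vset n"
proof -
  have "act_part \<sigma> ` Vset n = vpart n ` (\<sigma> ` {2..n})"
    unfolding Vset_def image_image using act_part_vpart[OF assms] by simp
  then have "act_part \<sigma> ` Vset n = Vset n"
    unfolding Vset_def stab1_image_atLeast2[OF assms] .
  then show ?thesis
    using inj_image_mem_iff[OF inj_act_part[OF stab1D(1)[OF assms]], of P "Vset n"] by simp
qed

lemma act_part_proper_part:
  assumes "\<sigma> \<in> stab1 n" "P \<in> proper_part n"
  shows "act_part \<sigma> P \<in> proper_part n"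
proof -
  note \<sigma> = stab1D[OF assms(1)]
  have "partition_on {1..n} (act_part \<sigma> P)"
    using partition_on_act_part[OF \<sigma>(1), of "{1..n}" P] assms(2) \<sigma>(3)
    unfolding proper_part_def setpart_def by simp
  moreover have "act_part \<sigma> P \<noteq> maxpart n" "act_part \<sigma> P \<noteq> minpart n"
    using assms(2) inj_act_part[OF \<sigma>(1)] act_part_maxpart[OF \<sigma>(3)] act_part_minpart[OF \<sigma>(3)]
    unfolding proper_part_def by (metis DiffE insertCI injD)+
  ultimately show ?thesis
    unfolding proper_part_def setpart_def by simp
qed

lemma act_simp_F0:
  assumes "\<sigma> \<in> stab1 n" "S \<in> F0 n"
  shows "act_simp \<sigma> S \<in> F0 n"
  using assms act_part_proper_part[OF assms(1)] act_part_in_Vset_iff[OF assms(1)]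
    refines_act_part_iff[OF stab1D(1)[OF assms(1)]]
  unfolding F0_def simplices_def act_simp_def by auto

lemma pivot_act_simp:
  assumes \<sigma>: "\<sigma> \<in> stab1 n" and S: "S \<in> F0 n" and "1 \<le> n"
  shows "pivot n (act_simp \<sigma> S) = act_part \<sigma> (pivot n S)"
proof -
  define C where "C = pivot_chain n S"
  note \<sigma>' = stab1D[OF \<sigma>]
  have simplex: "S \<in> simplices n"
    using S unfolding F0_def by blast
  note m = finest_pivot_chain[OF simplex \<open>1 \<le> n\<close>, folded C_def]
  have image: "pivot_chain n (act_simp \<sigma> S) = act_part \<sigma> ` C"
    unfolding act_simp_def C_def pivot_chain_def
    using act_part_maxpart[OF \<sigma>'(3)] singleton_one_in_act_part_iff[OF \<sigma>'(1,2)] by auto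
  have "finest (act_part \<sigma> ` C) = act_part \<sigma> (finest C)"
  proof (rule finest_eqI[where A = "{1..n}"])
    show "partition_on {1..n} x" if "x \<in> act_part \<sigma> ` C" for x
      using that simplices_partition_on[OF simplex] partition_on_maxpart[OF \<open>1 \<le> n\<close>]
        partition_on_act_part[OF \<sigma>'(1), of "{1..n}"] \<sigma>'(3) unfolding C_def pivot_chain_def by auto
    show "act_part \<sigma> (finest C) \<in> act_part \<sigma> ` C"
      using m(1) by simp
    show "refines (act_part \<sigma> (finest C)) x" if "x \<in> act_part \<sigma> ` C" for x
      using that m(2) refines_act_part_iff[OF \<sigma>'(1)] by auto
  qed
  then show ?thesis
    unfolding pivot_def image C_def[symmetric] using act_part_isolate_one[OF \<sigma>'(1,2)] by simp
qed

theorem lemma12: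
  fixes n :: nat
  assumes "n \<ge> 3"
  shows "\<exists>M. partial_matching (F0 n) M \<and> acyclic_matching M \<and>
             equivariant_matching (stab1 n) M \<and>
             critical (F0 n) M = {{alpha n}}"
proof (intro exI[of _ "element_matching (F0 n) (pivot n)"] conjI)
  show "partial_matching (F0 n) (element_matching (F0 n) (pivot n))"
    using pivot.partial_matching_element_matching insert_pivot_F0 assms by blast
  show "acyclic_matching (element_matching (F0 n) (pivot n))"
    using pivot.acyclic_element_matching finite_F0 by blast
  show "critical (F0 n) (element_matching (F0 n) (pivot n)) = {{alpha n}}"
    using critical_F0 assms by blast
  show "equivariant_matching (stab1 n) (element_matching (F0 n) (pivot n))"
    unfolding equivariant_matching_def act_simp_def
  proof (intro ballI, clarify)
    fix \<sigma> a b assume "\<sigma> \<in> stab1 n" "(a, b) \<in> element_matching (F0 n) (pivot n)"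
    then show "(act_part \<sigma> ` a, act_part \<sigma> ` b) \<in> element_matching (F0 n) (pivot n)"
      using element_matching_image[OF inj_act_part[OF stab1D(1)]] act_simp_F0 pivot_act_simp assms
      unfolding act_simp_def by simp
  qed
qed

end
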